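(* Let $J$ be a bounded open interval with $a>0$ on $J$, and let $x_0\in\partial J$ with $a(x_0)=0$. Let $\lambda\in\mathbb R$ and let $f\in C^1(J)$ be a bounded solution of $a(x)f'+H(x,f)=\lambda$ in $J$. Then $\lambda\ge\hat\lambda(x_0)$, and the limit $\lim_{x\to x_0,\,x\in J}f(x)$ exists and belongs to $\{p^-_\lambda(x_0),p^+_\lambda(x_0)\}$.
   Context: Deterministic setting: $a:\mathbb R\to[0,1]$ with $\sqrt a$ $\kappa$-Lipschitz. $H:\mathbb R\times\mathbb R\to\mathbb R$ belongs to $\mathscr H_{sqc}(\alpha_0,\alpha_1,\gamma,\eta)$ ($\gamma>2,\eta>0$): (H1) $\alpha_0|p|^\gamma-1/\alpha_0\le H(x,p)\le\alpha_1(|p|^\gamma+1)$, (H2) $|H(x,p)-H(x,q)|\le\alpha_1(|p|+|q|+1)^{\gamma-1}|p-q|$, (H3) $|H(x,p)-H(y,p)|\le\alpha_1(|p|^\gamma+1)|x-y|$, $H(x,\cdot)$ strictly quasiconvex with unique minimizer $\hat p(x)$, and $H(x,p_1)-H(x,p_2)\ge\eta|p_1-p_2|$ for $p_1<p_2\le\hat p(x)$, $H(x,p_2)-H(x,p_1)\ge\eta|p_1-p_2|$ for $p_2>p_1\ge\hat p(x)$. Notation: $\hat\lambda(x):=\min_pH(x,p)=H(x,\hat p(x))$; for $\lambda\ge\hat\lambda(x)$, $p^-_\lambda(x)\le p^+_\lambda(x)$ are defined by $\{p:H(x,p)\le\lambda\}=[p^-_\lambda(x),p^+_\lambda(x)]$.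 *)

theory Defs
  imports "HOL-Analysis.Analysis"
begin

definition strictly_quasiconvex :: "(real \<Rightarrow> real) \<Rightarrow> bool" where
  "strictly_quasiconvex g \<longleftrightarrow>
     (\<forall>p q t. p \<noteq> q \<and> 0 < t \<and> t < 1 \<longrightarrow> g (t * p + (1 - t) * q) < max (g p) (g q))"

definition hat_p :: "(real \<Rightarrow> real \<Rightarrow> real) \<Rightarrow> real \<Rightarrow> real" where
  "hat_p H x = (THE p. \<forall>q. H x p \<le> H x q)"

definition hat_lambda :: "(real \<Rightarrow> real \<Rightarrow> real) \<Rightarrow> real \<Rightarrow> real" where
  "hat_lambda H x = H x (hat_p H x)"

definition p_minus :: "(real \<Rightarrow> real \<Rightarrow> real) \<Rightarrow> real \<Rightarrow> real \<Rightarrow> real" where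
  "p_minus H lam x = Inf {p. H x p \<le> lam}"

definition p_plus :: "(real \<Rightarrow> real \<Rightarrow> real) \<Rightarrow> real \<Rightarrow> real \<Rightarrow> real" where
  "p_plus H lam x = Sup {p. H x p \<le> lam}"

definition H_sqc :: "real \<Rightarrow> real \<Rightarrow> real \<Rightarrow> real \<Rightarrow> (real \<Rightarrow> real \<Rightarrow> real) \<Rightarrow> bool" where
  "H_sqc \<alpha>0 \<alpha>1 \<gamma> \<eta> H \<longleftrightarrow>
     (\<forall>x p. \<alpha>0 * \<bar>p\<bar> powr \<gamma> - 1 / \<alpha>0 \<le> H x p \<and> H x p \<le> \<alpha>1 * (\<bar>p\<bar> powr \<gamma> + 1)) \<and>
     (\<forall>x p q. \<bar>H x p - H x q\<bar> \<le> \<alpha>1 * (\<bar>p\<bar> + \<bar>q\<bar> + 1) powr (\<gamma> - 1) * \<bar>p - q\<bar>) \<and>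
     (\<forall>x y p. \<bar>H x p - H y p\<bar> \<le> \<alpha>1 * (\<bar>p\<bar> powr \<gamma> + 1) * \<bar>x - y\<bar>) \<and>
     (\<forall>x. strictly_quasiconvex (H x) \<and> (\<exists>!p. \<forall>q. H x p \<le> H x q)) \<and>
     (\<forall>x p1 p2. p1 < p2 \<and> p2 \<le> hat_p H x \<longrightarrow> H x p1 - H x p2 \<ge> \<eta> * \<bar>p1 - p2\<bar>) \<and>
     (\<forall>x p1 p2. p2 > p1 \<and> p1 \<ge> hat_p H x \<longrightarrow> H x p2 - H x p1 \<ge> \<eta> * \<bar>p1 - p2\<bar>)"

end

theory Submission
  imports Defs
begin

text \<open>Near the degenerate endpoint \<open>a t \<le> \<kappa>\<^sup>2 (t - x0)\<^sup>2\<close>, so wherever \<open>h = H x0 \<cdot> - \<lambda>\<close>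
  stays away from \<open>0\<close> along the solution, the equation forces \<open>\<bar>f'\<bar> \<ge> c / (t - x0)\<^sup>2\<close>, which is not
  integrable at \<open>x0\<close>; a bounded \<open>f\<close> cannot do this all the way to \<open>x0\<close>. If \<open>\<lambda> < hat_lambda H x0\<close>,
  then \<open>h > 0\<close> everywhere, a contradiction. Otherwise \<open>h\<close> is positive outside \<open>[p\<^sup>-, p\<^sup>+]\<close> and
  negative inside, growing at rate \<open>\<eta>\<close> away from its zeros, so the sign of \<open>f'\<close> turns the levels
  \<open>p\<^sup>- - e\<close>, \<open>p\<^sup>+ + e\<close> and the band \<open>[p\<^sup>- + e, p\<^sup>+ - e]\<close> into one-way barriers. This traps \<open>f\<close> near
  \<open>p\<^sup>-\<close> or near \<open>p\<^sup>+\<close> at every scale \<open>e\<close>, and the side chosen at a coarse scale persists at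
  all finer ones.\<close>

section \<open>Barriers and blow-up for steep slopes\<close>

lemma level_barrier_ge:
  fixes f f' :: "real \<Rightarrow> real"
  assumes deriv: "\<And>t. t \<in> {l<..y} \<Longrightarrow> (f has_real_derivative f' t) (at t)"
    and crossing: "\<And>t. t \<in> {l<..y} \<Longrightarrow> f t = c \<Longrightarrow> f' t < 0"
    and "c \<le> f y" and t: "t \<in> {l<..y}"
  shows "c \<le> f t"
proof (rule ccontr)
  assume "\<not> c \<le> f t"
  with \<open>c \<le> f y\<close> t have "t < y" "f t < c" by (cases "t = y"; auto)+
  have cont: "continuous_on {t..y} f"
    using t by (intro continuous_at_imp_continuous_on ballI DERIV_isCont[OF deriv]) auto
  define S where "S = {t..y} \<inter> f -` {c..}"
  have "y \<in> S" "bdd_below S" using \<open>t < y\<close> \<open>c \<le> f y\<close> by (auto simp: S_def)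
  moreover have "closed S"
    unfolding S_def using cont by (intro continuous_closed_preimage) auto
  ultimately have "Inf S \<in> S" by (intro closed_contains_Inf) auto
  define s where "s = Inf S"
  have below_S: "s \<le> u" if "u \<in> S" for u
    using that \<open>bdd_below S\<close> by (simp add: s_def cInf_lower)
  have "s \<in> S" using \<open>Inf S \<in> S\<close> by (simp add: s_def)
  with \<open>f t < c\<close> have "t < s" "s \<le> y" "c \<le> f s" by (auto simp: S_def order.order_iff_strict)
  have "f s = c"
  proof (rule ccontr)
    assume "f s \<noteq> c"
    then obtain u where "t \<le> u" "u \<le> s" "f u = c"
      using IVT'[of f t c s] \<open>t < s\<close> \<open>s \<le> y\<close> \<open>f t < c\<close> \<open>c \<le> f s\<close>
        continuous_on_subset[OF cont] by fastforce
    with \<open>s \<le> y\<close> have "u \<in> S" by (simp add: S_def)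
    with \<open>u \<le> s\<close> \<open>f u = c\<close> \<open>f s \<noteq> c\<close> below_S show False by force
  qed
  have "s \<in> {l<..y}" using t \<open>t < s\<close> \<open>s \<le> y\<close> by auto
  then obtain d where "0 < d" and left_above: "\<And>h. 0 < h \<Longrightarrow> h < d \<Longrightarrow> f s < f (s - h)"
    using DERIV_neg_dec_left[OF deriv crossing] \<open>f s = c\<close> by blast
  define h where "h = min d (s - t) / 2"
  have "0 < h" "h < d" "t \<le> s - h" using \<open>0 < d\<close> \<open>t < s\<close> by (auto simp: h_def min_def field_simps)
  with left_above \<open>f s = c\<close> \<open>s \<le> y\<close> have "s - h \<in> S" by (fastforce simp: S_def)
  with below_S \<open>0 < h\<close> show False by fastforce
qed

lemma level_barrier_le:
  fixes f f' :: "real \<Rightarrow> real"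
  assumes deriv: "\<And>t. t \<in> {l<..y} \<Longrightarrow> (f has_real_derivative f' t) (at t)"
    and crossing: "\<And>t. t \<in> {l<..y} \<Longrightarrow> f t = c \<Longrightarrow> 0 < f' t"
    and "f y \<le> c" and "t \<in> {l<..y}"
  shows "f t \<le> c"
  using level_barrier_ge[of l y "\<lambda>t. - f t" "\<lambda>t. - f' t" "- c" t] assms
  by (auto intro: derivative_intros)

lemma unbounded_above_if_slope_le:
  fixes f f' :: "real \<Rightarrow> real"
  assumes "l < y" and "0 < c"
    and deriv: "\<And>t. t \<in> {l<..y} \<Longrightarrow> (f has_real_derivative f' t) (at t)"
    and slope: "\<And>t. t \<in> {l<..y} \<Longrightarrow> f' t \<le> - c / (t - l)^2"
  shows "\<not> bdd_above (f ` {l<..y})"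
proof
  assume "bdd_above (f ` {l<..y})"
  then obtain M where M: "\<And>t. t \<in> {l<..y} \<Longrightarrow> f t \<le> M"
    by (meson bdd_above.E imageI)
  define g where "g t = f t - c / (t - l)" for t
  have g_mono: "g y \<le> g t" if t: "t \<in> {l<..y}" for t
  proof (rule DERIV_nonpos_imp_nonincreasing[of t y g])
    fix x assume "t \<le> x" "x \<le> y"
    with t have x: "x \<in> {l<..y}" by auto
    then have "(g has_real_derivative f' x + c / (x - l)^2) (at x)"
      unfolding g_def using deriv
      by (auto intro!: derivative_eq_intros simp: power2_eq_square field_simps)
    moreover have "f' x + c / (x - l)^2 \<le> 0" using slope[OF x] by simp
    ultimately show "\<exists>y. (g has_real_derivative y) (at x) \<and> y \<le> 0" by blast
  qed (use t in auto)
  \<comment> \<open>Near \<open>l\<close> the term \<open>c / (t - l)\<close> exceeds any bound, and \<open>f \<ge> g y + c / (t - l)\<close>.\<close>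
  define B where "B = \<bar>M - g y\<bar> + 1"
  define t where "t = l + min (y - l) (c / B)"
  have "0 < c / B" using \<open>0 < c\<close> by (simp add: B_def)
  then have t: "t \<in> {l<..y}" "t - l \<le> c / B" using \<open>l < y\<close> by (auto simp: t_def)
  then have "B \<le> c / (t - l)" using \<open>0 < c\<close> by (simp add: B_def field_simps)
  then have "M < f t" using g_mono[OF t(1)] by (simp add: g_def B_def)
  with M[OF t(1)] show False by simp
qed

lemma eventually_ge_if_slope_le_below:
  fixes f f' :: "real \<Rightarrow> real"
  assumes "l < y" and "0 < c"
    and deriv: "\<And>t. t \<in> {l<..y} \<Longrightarrow> (f has_real_derivative f' t) (at t)"
    and slope: "\<And>t. t \<in> {l<..y} \<Longrightarrow> f t \<le> v \<Longrightarrow> f' t \<le> - c / (t - l)^2"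
    and bdd: "bdd_above (f ` {l<..y})"
  shows "eventually (\<lambda>t. v \<le> f t) (at_right l)"
proof -
  have "\<exists>x\<in>{l<..y}. v \<le> f x"
  proof (rule ccontr)
    assume "\<not> ?thesis"
    then have "\<not> bdd_above (f ` {l<..y})"
      using assms by (intro unbounded_above_if_slope_le[where f' = f']) force+
    with bdd show False by contradiction
  qed
  then obtain x where x: "x \<in> {l<..y}" "v \<le> f x" ..
  have "v \<le> f t" if "t \<in> {l<..x}" for t
  proof (rule level_barrier_ge[where f = f and f' = f' and l = l and y = x])
    show "f' s < 0" if "s \<in> {l<..x}" "f s = v" for s
      using slope[of s] that x \<open>0 < c\<close> by (fastforce intro: order.strict_trans1)
  qed (use x that deriv in auto)
  then show ?thesis using x by (intro eventually_at_rightI[of l x]) auto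
qed

lemma eventually_le_if_slope_ge_above:
  fixes f f' :: "real \<Rightarrow> real"
  assumes "l < y" and "0 < c"
    and "\<And>t. t \<in> {l<..y} \<Longrightarrow> (f has_real_derivative f' t) (at t)"
    and "\<And>t. t \<in> {l<..y} \<Longrightarrow> v \<le> f t \<Longrightarrow> c / (t - l)^2 \<le> f' t"
    and "bdd_below (f ` {l<..y})"
  shows "eventually (\<lambda>t. f t \<le> v) (at_right l)"
  using eventually_ge_if_slope_le_below[of l y c "\<lambda>t. - f t" "\<lambda>t. - f' t" "- v"] assms
  by (auto intro: derivative_intros simp: bdd_above_uminus image_image[symmetric])

lemma less_if_slope_le_above:
  fixes f f' :: "real \<Rightarrow> real"
  assumes "0 < c"
    and deriv: "\<And>t. t \<in> {l<..y} \<Longrightarrow> (f has_real_derivative f' t) (at t)"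
    and slope: "\<And>t. t \<in> {l<..y} \<Longrightarrow> v \<le> f t \<Longrightarrow> f' t \<le> - c / (t - l)^2"
    and bdd: "bdd_above (f ` {l<..y})"
    and t: "t \<in> {l<..y}"
  shows "f t < v"
proof (rule ccontr)
  assume "\<not> f t < v"
  have above: "v \<le> f s" if "s \<in> {l<..t}" for s
  proof (rule level_barrier_ge[where f = f and f' = f' and l = l and y = t])
    show "f' u < 0" if "u \<in> {l<..t}" "f u = v" for u
      using slope[of u] that t \<open>0 < c\<close> by (fastforce intro: order.strict_trans1)
  qed (use t that deriv \<open>\<not> f t < v\<close> in auto)
  have "\<not> bdd_above (f ` {l<..t})"
  proof (rule unbounded_above_if_slope_le[where f' = f'])
    fix s assume s: "s \<in> {l<..t}"
    with t have "s \<in> {l<..y}" by auto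
    then show "(f has_real_derivative f' s) (at s)" by (rule deriv)
    show "f' s \<le> - c / (s - l)^2" using \<open>s \<in> {l<..y}\<close> above[OF s] by (rule slope)
  qed (use t \<open>0 < c\<close> in auto)
  moreover have "bdd_above (f ` {l<..t})"
    using t by (intro bdd_above_mono[OF bdd] image_mono) auto
  ultimately show False by contradiction
qed

section \<open>Limits trapped near two values\<close>

lemma tendsto_real_if_eventually_near:
  fixes f :: "'a \<Rightarrow> real"
  assumes "\<And>e. 0 < e \<Longrightarrow> eventually (\<lambda>x. L - e \<le> f x \<and> f x \<le> L + e) F"
  shows "(f \<longlongrightarrow> L) F"
  unfolding tendsto_iff dist_real_def
proof (intro allI impI)
  fix e :: real assume "0 < e"
  with assms[of "e / 2"] show "eventually (\<lambda>x. \<bar>f x - L\<bar> < e) F"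
    by (auto elim!: eventually_mono)
qed

lemma tendsto_one_of_two:
  fixes f :: "'a \<Rightarrow> real"
  assumes "F \<noteq> bot" and "pm \<le> pp"
    and trapped: "\<And>e. 0 < e \<Longrightarrow> eventually (\<lambda>x. pm - e \<le> f x \<and> f x \<le> pp + e) F"
    and dichotomy: "\<And>e. 0 < e \<Longrightarrow> 2 * e \<le> pp - pm \<Longrightarrow>
      eventually (\<lambda>x. f x \<le> pm + e) F \<or> eventually (\<lambda>x. pp - e \<le> f x) F"
  shows "(f \<longlongrightarrow> pm) F \<or> (f \<longlongrightarrow> pp) F"
proof (cases "pm = pp")
  case True
  then show ?thesis using trapped by (auto intro: tendsto_real_if_eventually_near)
next
  case False
  \<comment> \<open>Once \<open>f\<close> is eventually on one side of the gap at the coarse scale \<open>e0\<close>,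
    the dichotomy at every finer scale must choose the same side.\<close>
  define e0 where "e0 = (pp - pm) / 4"
  have "0 < e0" "2 * e0 \<le> pp - pm" and gap: "pm + e0 < pp - e0"
    using \<open>pm \<le> pp\<close> False by (auto simp: e0_def field_simps)
  have separated: "\<not> (eventually (\<lambda>x. f x \<le> u) F \<and> eventually (\<lambda>x. v \<le> f x) F)"
    if "u < v" for u v
    using eventually_happens'[OF \<open>F \<noteq> bot\<close>, of "\<lambda>x. f x \<le> u \<and> v \<le> f x"] that
    by (auto simp: eventually_conj_iff)
  have finer: "eventually (\<lambda>x. f x \<le> pm + min e e0) F \<or> eventually (\<lambda>x. pp - min e e0 \<le> f x) F"
    if "0 < e" for e
    using dichotomy[of "min e e0"] that \<open>0 < e0\<close> \<open>2 * e0 \<le> pp - pm\<close> by auto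
  have near: "(f \<longlongrightarrow> L) F"
    if "\<And>e. 0 < e \<Longrightarrow> eventually (\<lambda>x. L - min e e0 \<le> f x \<and> f x \<le> L + min e e0) F" for L
  proof (rule tendsto_real_if_eventually_near)
    fix e :: real assume "0 < e"
    from that[OF this] show "eventually (\<lambda>x. L - e \<le> f x \<and> f x \<le> L + e) F"
      by (auto elim!: eventually_mono)
  qed
  consider "eventually (\<lambda>x. f x \<le> pm + e0) F" | "eventually (\<lambda>x. pp - e0 \<le> f x) F"
    using dichotomy[OF \<open>0 < e0\<close> \<open>2 * e0 \<le> pp - pm\<close>] by blast
  then show ?thesis
  proof cases
    case 1
    have "(f \<longlongrightarrow> pm) F"
    proof (rule near)
      fix e :: real assume "0 < e"
      moreover have "pm + e0 < pp - min e e0" using gap by linarith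
      ultimately have "eventually (\<lambda>x. f x \<le> pm + min e e0) F"
        using 1 finer separated by blast
      moreover have "eventually (\<lambda>x. pm - min e e0 \<le> f x \<and> f x \<le> pp + min e e0) F"
        using \<open>0 < e\<close> \<open>0 < e0\<close> by (intro trapped) simp
      ultimately show "eventually (\<lambda>x. pm - min e e0 \<le> f x \<and> f x \<le> pm + min e e0) F"
        by (rule eventually_mono[OF eventually_conj]) auto
    qed
    then show ?thesis ..
  next
    case 2
    have "(f \<longlongrightarrow> pp) F"
    proof (rule near)
      fix e :: real assume "0 < e"
      moreover have "pm + min e e0 < pp - e0" using gap by linarith
      ultimately have "eventually (\<lambda>x. pp - min e e0 \<le> f x) F"
        using 2 finer separated by blast
      moreover have "eventually (\<lambda>x. pm - min e e0 \<le> f x \<and> f x \<le> pp + min e e0) F"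
        using \<open>0 < e\<close> \<open>0 < e0\<close> by (intro trapped) simp
      ultimately show "eventually (\<lambda>x. pp - min e e0 \<le> f x \<and> f x \<le> pp + min e e0) F"
        by (rule eventually_mono[OF eventually_conj]) auto
    qed
    then show ?thesis ..
  qed
qed

section \<open>Sublevel sets of functions with linear growth\<close>

definition nondegenerate_zeros :: "(real \<Rightarrow> real) \<Rightarrow> real \<Rightarrow> real \<Rightarrow> real \<Rightarrow> bool" where
  "nondegenerate_zeros h \<eta> pm pp \<longleftrightarrow> 0 < \<eta> \<and> pm \<le> pp \<and>
     (\<forall>p e. 0 < e \<and> (pp + e \<le> p \<or> p \<le> pm - e) \<longrightarrow> \<eta> * e \<le> h p) \<and>
     (\<forall>p e. 0 < e \<and> pm + e \<le> p \<and> p \<le> pp - e \<longrightarrow> \<eta> * e \<le> - h p)"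

lemma nondegenerate_zeros_reflect:
  assumes "nondegenerate_zeros h \<eta> pm pp"
  shows "nondegenerate_zeros (\<lambda>p. h (- p)) \<eta> (- pp) (- pm)"
  using assms unfolding nondegenerate_zeros_def
  by (smt (verit))

lemma Sup_sublevel_rate:
  fixes \<phi> :: "real \<Rightarrow> real"
  assumes "0 < \<eta>" and "\<phi> q \<le> lam"
    and rate: "\<And>p1 p2. q \<le> p1 \<Longrightarrow> p1 < p2 \<Longrightarrow> \<eta> * (p2 - p1) \<le> \<phi> p2 - \<phi> p1"
  defines "b \<equiv> Sup {p. \<phi> p \<le> lam}"
  shows "q \<le> b"
    and "b < p \<Longrightarrow> \<eta> * (p - b) \<le> \<phi> p - lam"
    and "q \<le> p \<Longrightarrow> p < b \<Longrightarrow> \<eta> * (b - p) \<le> lam - \<phi> p"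
proof -
  define S where "S = {p. \<phi> p \<le> lam}"
  have "q \<in> S" using \<open>\<phi> q \<le> lam\<close> by (simp add: S_def)
  have "bdd_above S"
  proof (rule bdd_aboveI)
    fix p assume "p \<in> S"
    show "p \<le> q + (lam - \<phi> q) / \<eta>"
    proof (cases "q < p")
      case True
      with rate[of q p] \<open>p \<in> S\<close> \<open>0 < \<eta>\<close> show ?thesis by (simp add: S_def field_simps)
    next
      case False
      moreover have "0 \<le> (lam - \<phi> q) / \<eta>" using \<open>0 < \<eta>\<close> \<open>\<phi> q \<le> lam\<close> by simp
      ultimately show ?thesis by simp
    qed
  qed
  have b: "b = Sup S" by (simp add: b_def S_def)
  show "q \<le> b" unfolding b using \<open>q \<in> S\<close> \<open>bdd_above S\<close> by (rule cSup_upper)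
  show "\<eta> * (p - b) \<le> \<phi> p - lam" if "b < p"
  proof -
    have "p - (\<phi> p - lam) / \<eta> \<le> b"
    proof (rule dense_ge_bounded[OF that])
      fix w assume "b < w" "w < p"
      then have "\<phi> w > lam"
        using cSup_upper[OF _ \<open>bdd_above S\<close>, of w] b by (force simp: S_def)
      moreover have "\<eta> * (p - w) \<le> \<phi> p - \<phi> w"
        using rate \<open>q \<le> b\<close> \<open>b < w\<close> \<open>w < p\<close> by simp
      ultimately show "p - (\<phi> p - lam) / \<eta> \<le> w" using \<open>0 < \<eta>\<close> by (simp add: field_simps)
    qed
    with \<open>0 < \<eta>\<close> show ?thesis by (simp add: field_simps)
  qed
  show "\<eta> * (b - p) \<le> lam - \<phi> p" if "q \<le> p" "p < b"
  proof -
    have "b \<le> p + (lam - \<phi> p) / \<eta>"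
    proof (rule dense_le_bounded[OF \<open>p < b\<close>])
      fix w assume "p < w" "w < b"
      then obtain z where "z \<in> S" "w < z"
        using less_cSup_iff[of S w] \<open>q \<in> S\<close> \<open>bdd_above S\<close> b by auto
      moreover have "0 \<le> \<eta> * (z - w)" using \<open>0 < \<eta>\<close> \<open>w < z\<close> by simp
      moreover have "\<eta> * (z - w) \<le> \<phi> z - \<phi> w"
        using rate \<open>q \<le> p\<close> \<open>p < w\<close> \<open>w < z\<close> by simp
      ultimately have "\<phi> w \<le> lam" by (simp add: S_def)
      moreover have "\<eta> * (w - p) \<le> \<phi> w - \<phi> p" using rate \<open>q \<le> p\<close> \<open>p < w\<close> by simp
      ultimately show "w \<le> p + (lam - \<phi> p) / \<eta>" using \<open>0 < \<eta>\<close> by (simp add: field_simps)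
    qed
    with \<open>0 < \<eta>\<close> show ?thesis by (simp add: field_simps)
  qed
qed

lemma nondegenerate_zeros_sublevel:
  fixes \<phi> :: "real \<Rightarrow> real"
  assumes "0 < \<eta>" and "\<phi> q \<le> lam"
    and inc: "\<And>p1 p2. q \<le> p1 \<Longrightarrow> p1 < p2 \<Longrightarrow> \<eta> * (p2 - p1) \<le> \<phi> p2 - \<phi> p1"
    and dec: "\<And>p1 p2. p1 < p2 \<Longrightarrow> p2 \<le> q \<Longrightarrow> \<eta> * (p2 - p1) \<le> \<phi> p1 - \<phi> p2"
  shows "nondegenerate_zeros (\<lambda>p. \<phi> p - lam) \<eta> (Inf {p. \<phi> p \<le> lam}) (Sup {p. \<phi> p \<le> lam})"
proof -
  define pp where "pp = Sup {p. \<phi> p \<le> lam}"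
  define pm' where "pm' = Sup {p. \<phi> (- p) \<le> lam}"
  have "uminus ` {p. \<phi> p \<le> lam} = {p. \<phi> (- p) \<le> lam}"
    by (auto intro: image_eqI[where x = "- _"])
  then have pm: "Inf {p. \<phi> p \<le> lam} = - pm'" by (simp add: Inf_real_def pm'_def)
  have "q \<le> pp"
    and right_out: "pp < p \<Longrightarrow> \<eta> * (p - pp) \<le> \<phi> p - lam"
    and right_in: "q \<le> p \<Longrightarrow> p < pp \<Longrightarrow> \<eta> * (pp - p) \<le> lam - \<phi> p" for p
    using Sup_sublevel_rate[OF \<open>0 < \<eta>\<close> \<open>\<phi> q \<le> lam\<close> inc] by (simp_all add: pp_def)
  have "- q \<le> pm'"
    and left_out: "pm' < p \<Longrightarrow> \<eta> * (p - pm') \<le> \<phi> (- p) - lam"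
    and left_in: "- q \<le> p \<Longrightarrow> p < pm' \<Longrightarrow> \<eta> * (pm' - p) \<le> lam - \<phi> (- p)" for p
    using Sup_sublevel_rate[of \<eta> "\<lambda>p. \<phi> (- p)" "- q" lam] assms dec[of "- _" "- _"]
    by (simp_all add: pm'_def)
  have "\<eta> * e \<le> \<phi> p - lam" if "0 < e" "pp + e \<le> p \<or> p \<le> - pm' - e" for p e
    using that(2)
  proof
    assume "pp + e \<le> p"
    then have "\<eta> * e \<le> \<eta> * (p - pp)" using \<open>0 < \<eta>\<close> by (intro mult_left_mono) auto
    also have "\<dots> \<le> \<phi> p - lam" using that(1) \<open>pp + e \<le> p\<close> by (intro right_out) simp
    finally show ?thesis .
  next
    assume "p \<le> - pm' - e"
    then have "\<eta> * e \<le> \<eta> * (- p - pm')" using \<open>0 < \<eta>\<close> by (intro mult_left_mono) auto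
    also have "\<dots> \<le> \<phi> p - lam" using that(1) \<open>p \<le> - pm' - e\<close> left_out[of "- p"] by simp
    finally show ?thesis .
  qed
  moreover have "\<eta> * e \<le> lam - \<phi> p" if "0 < e" "- pm' + e \<le> p" "p \<le> pp - e" for p e
  proof (cases "q \<le> p")
    case True
    have "\<eta> * e \<le> \<eta> * (pp - p)" using \<open>0 < \<eta>\<close> that by (intro mult_left_mono) auto
    also have "\<dots> \<le> lam - \<phi> p" using True that by (intro right_in) auto
    finally show ?thesis .
  next
    case False
    have "\<eta> * e \<le> \<eta> * (pm' - - p)" using \<open>0 < \<eta>\<close> that by (intro mult_left_mono) auto
    also have "\<dots> \<le> lam - \<phi> p" using False that left_in[of "- p"] by simp
    finally show ?thesis .
  qed
  moreover have "- pm' \<le> pp" using \<open>q \<le> pp\<close> \<open>- q \<le> pm'\<close> by simp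
  ultimately show ?thesis
    using \<open>0 < \<eta>\<close> unfolding nondegenerate_zeros_def pm pp_def[symmetric] by auto
qed

section \<open>Bounded solutions near a degenerate endpoint\<close>

locale left_degenerate_ode =
  fixes f f' a h :: "real \<Rightarrow> real" and l r K C :: real
  assumes l_less_r: "l < r"
    and has_deriv: "\<And>t. t \<in> {l<..<r} \<Longrightarrow> (f has_real_derivative f' t) (at t)"
    and a_pos: "\<And>t. t \<in> {l<..<r} \<Longrightarrow> 0 < a t"
    and a_le: "\<And>t. t \<in> {l<..<r} \<Longrightarrow> a t \<le> K * (t - l)^2"
    and residual_le: "\<And>t. t \<in> {l<..<r} \<Longrightarrow> \<bar>a t * f' t + h (f t)\<bar> \<le> C * (t - l)"
    and bounded_f: "bounded (f ` {l<..<r})"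
begin

lemma has_deriv_near: "y < r \<Longrightarrow> t \<in> {l<..y} \<Longrightarrow> (f has_real_derivative f' t) (at t)"
  by (auto intro: has_deriv)

lemma bdd_near:
  assumes "y < r" shows "bdd_above (f ` {l<..y})" "bdd_below (f ` {l<..y})"
proof -
  have "bounded (f ` {l<..y})" using assms by (intro bounded_subset[OF bounded_f]) auto
  then show "bdd_above (f ` {l<..y})" "bdd_below (f ` {l<..y})"
    by (simp_all add: bounded_imp_bdd_above bounded_imp_bdd_below)
qed

lemma slope_bounds:
  assumes "0 < d"
  obtains y c where "y \<in> {l<..<r}" "0 < c"
    "\<And>t. t \<in> {l<..y} \<Longrightarrow> d \<le> h (f t) \<Longrightarrow> f' t \<le> - c / (t - l)^2"
    "\<And>t. t \<in> {l<..y} \<Longrightarrow> d \<le> - h (f t) \<Longrightarrow> c / (t - l)^2 \<le> f' t"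
proof -
  define m where "m = (l + r) / 2"
  have m: "m \<in> {l<..<r}" using l_less_r by (simp add: m_def)
  have "0 < K" using order.strict_trans2[OF a_pos[OF m] a_le[OF m]] m by (simp add: zero_less_mult_iff)
  have "0 \<le> C" using order_trans[OF abs_ge_zero residual_le[OF m]] m by (simp add: zero_le_mult_iff)
  define \<delta> where "\<delta> = min (r - l) (d / (2 * (C + 1)))"
  have "0 < \<delta>" "\<delta> \<le> r - l" "\<delta> \<le> d / (2 * (C + 1))"
    using l_less_r \<open>0 < d\<close> \<open>0 \<le> C\<close> by (auto simp: \<delta>_def)
  define y where "y = l + \<delta> / 2"
  define c where "c = d / (2 * K)"
  have "y \<in> {l<..<r}" "0 < c" using \<open>0 < \<delta>\<close> \<open>\<delta> \<le> r - l\<close> \<open>0 < d\<close> \<open>0 < K\<close>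
    by (auto simp: y_def c_def)
  have small: "C * (t - l) \<le> d / 2" if "t \<in> {l<..y}" for t
  proof -
    have "C * (t - l) \<le> (C + 1) * (t - l)" using that by (simp add: algebra_simps)
    also have "\<dots> \<le> (C + 1) * (d / (2 * (C + 1)))"
      using that \<open>0 \<le> C\<close> \<open>0 < \<delta>\<close> \<open>\<delta> \<le> d / (2 * (C + 1))\<close>
      by (intro mult_left_mono) (auto simp: y_def)
    also have "\<dots> = d / 2" using \<open>0 \<le> C\<close> by (simp add: field_simps)
    finally show ?thesis .
  qed
  have divide: "c / (t - l)^2 \<le> x" if "t \<in> {l<..y}" "d / 2 \<le> x * a t" for t x
  proof -
    have t: "t \<in> {l<..<r}" using that \<open>y \<in> {l<..<r}\<close> by auto
    have "c / (t - l)^2 = (d / 2) / (K * (t - l)^2)" by (simp add: c_def)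
    also have "\<dots> \<le> (d / 2) / a t"
      using a_pos[OF t] a_le[OF t] \<open>0 < d\<close> by (intro divide_left_mono) auto
    also have "\<dots> \<le> x" using that a_pos[OF t] by (simp add: divide_le_eq)
    finally show ?thesis .
  qed
  show ?thesis
  proof
    show "y \<in> {l<..<r}" "0 < c" by fact+
    fix t assume t: "t \<in> {l<..y}"
    with \<open>y \<in> {l<..<r}\<close> have "t \<in> {l<..<r}" by auto
    with small[OF t] have "\<bar>a t * f' t + h (f t)\<bar> \<le> d / 2"
      using residual_le by (meson order_trans)
    show "f' t \<le> - c / (t - l)^2" if "d \<le> h (f t)"
    proof -
      have "d / 2 \<le> - f' t * a t"
        using abs_le_D1[OF \<open>\<bar>_\<bar> \<le> d / 2\<close>] that by (simp add: mult.commute)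
      then show ?thesis using divide[OF t] by fastforce
    qed
    show "c / (t - l)^2 \<le> f' t" if "d \<le> - h (f t)"
    proof -
      have "d / 2 \<le> f' t * a t"
        using abs_le_D2[OF \<open>\<bar>_\<bar> \<le> d / 2\<close>] that by (simp add: mult.commute)
      then show ?thesis using divide[OF t] by fastforce
    qed
  qed
qed

lemma h_lower_bound_nonpos:
  assumes "\<And>p. d \<le> h p" shows "d \<le> 0"
proof (rule ccontr)
  assume "\<not> d \<le> 0"
  then have "0 < d" by simp
  then obtain y c where y: "y \<in> {l<..<r}" "0 < c"
    and slope: "\<And>t. t \<in> {l<..y} \<Longrightarrow> d \<le> h (f t) \<Longrightarrow> f' t \<le> - c / (t - l)^2"
    by (rule slope_bounds) blast
  have "\<not> bdd_above (f ` {l<..y})"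
  proof (rule unbounded_above_if_slope_le[where f' = f' and c = c])
    fix t assume t: "t \<in> {l<..y}"
    show "(f has_real_derivative f' t) (at t)" using y t by (intro has_deriv_near) auto
    show "f' t \<le> - c / (t - l)^2" using t assms by (rule slope)
  qed (use y in auto)
  moreover have "bdd_above (f ` {l<..y})" using y by (intro bdd_near) auto
  ultimately show False by contradiction
qed

context
  fixes \<eta> pm pp :: real
  assumes zeros: "nondegenerate_zeros h \<eta> pm pp"
begin

lemma slope_bounds_off_zeros:
  assumes "0 < e"
  obtains y c where "y \<in> {l<..<r}" "0 < c"
    "\<And>t. t \<in> {l<..y} \<Longrightarrow> pp + e \<le> f t \<or> f t \<le> pm - e \<Longrightarrow> f' t \<le> - c / (t - l)^2"
    "\<And>t. t \<in> {l<..y} \<Longrightarrow> pm + e \<le> f t \<Longrightarrow> f t \<le> pp - e \<Longrightarrow> c / (t - l)^2 \<le> f' t"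
proof -
  have "0 < \<eta> * e" using zeros \<open>0 < e\<close> by (simp add: nondegenerate_zeros_def)
  then obtain y c where "y \<in> {l<..<r}" "0 < c"
    and neg: "\<And>t. t \<in> {l<..y} \<Longrightarrow> \<eta> * e \<le> h (f t) \<Longrightarrow> f' t \<le> - c / (t - l)^2"
    and pos: "\<And>t. t \<in> {l<..y} \<Longrightarrow> \<eta> * e \<le> - h (f t) \<Longrightarrow> c / (t - l)^2 \<le> f' t"
    by (rule slope_bounds) blast
  show thesis
  proof (rule that[OF \<open>y \<in> _\<close> \<open>0 < c\<close>])
    fix t assume "t \<in> {l<..y}"
    then show "f' t \<le> - c / (t - l)^2" if "pp + e \<le> f t \<or> f t \<le> pm - e"
      using zeros \<open>0 < e\<close> that by (intro neg) (auto simp: nondegenerate_zeros_def)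
    show "c / (t - l)^2 \<le> f' t" if "pm + e \<le> f t" "f t \<le> pp - e"
      using zeros \<open>0 < e\<close> that \<open>t \<in> _\<close> by (intro pos) (auto simp: nondegenerate_zeros_def)
  qed
qed

lemma eventually_trapped:
  assumes "0 < e"
  shows "eventually (\<lambda>t. pm - e \<le> f t \<and> f t \<le> pp + e) (at_right l)"
proof -
  obtain y c where y: "y \<in> {l<..<r}" "0 < c"
    and out: "\<And>t. t \<in> {l<..y} \<Longrightarrow> pp + e \<le> f t \<or> f t \<le> pm - e \<Longrightarrow> f' t \<le> - c / (t - l)^2"
    by (rule slope_bounds_off_zeros[OF assms]) blast
  have deriv: "(f has_real_derivative f' t) (at t)" if "t \<in> {l<..y}" for t
    using that y by (intro has_deriv_near) auto
  have "bdd_above (f ` {l<..y})" using y by (intro bdd_near) auto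
  have above: "f' t \<le> - c / (t - l)^2" if "t \<in> {l<..y}" "pp + e \<le> f t" for t
    using that by (intro out) auto
  have below: "f' t \<le> - c / (t - l)^2" if "t \<in> {l<..y}" "f t \<le> pm - e" for t
    using that by (intro out) auto
  have "f t < pp + e" if "t \<in> {l<..y}" for t
    using \<open>0 < c\<close> deriv above \<open>bdd_above _\<close> that by (rule less_if_slope_le_above)
  then have "eventually (\<lambda>t. f t \<le> pp + e) (at_right l)"
    using y by (intro eventually_at_rightI[of l y]) (auto intro: less_imp_le)
  moreover have "eventually (\<lambda>t. pm - e \<le> f t) (at_right l)"
    using y \<open>0 < c\<close> deriv below \<open>bdd_above _\<close> by (intro eventually_ge_if_slope_le_below) auto
  ultimately show ?thesis by (simp add: eventually_conj_iff)
qed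

lemma eventually_one_side:
  assumes "0 < e" and "2 * e \<le> pp - pm"
  shows "eventually (\<lambda>t. f t \<le> pm + e) (at_right l) \<or> eventually (\<lambda>t. pp - e \<le> f t) (at_right l)"
proof (rule disjCI)
  obtain y c where y: "y \<in> {l<..<r}" "0 < c"
    and inside: "\<And>t. t \<in> {l<..y} \<Longrightarrow> pm + e \<le> f t \<Longrightarrow> f t \<le> pp - e \<Longrightarrow> c / (t - l)^2 \<le> f' t"
    by (rule slope_bounds_off_zeros[OF \<open>0 < e\<close>]) blast
  assume "\<not> eventually (\<lambda>t. pp - e \<le> f t) (at_right l)"
  moreover have "eventually (\<lambda>t. pp - e \<le> f t) (at_right l)" if "\<forall>x\<in>{l<..y}. pp - e \<le> f x"
    using that y by (intro eventually_at_rightI[of l y]) auto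
  ultimately obtain x where x: "x \<in> {l<..y}" "f x < pp - e" by force
  \<comment> \<open>Inside the band \<open>[pm + e, pp - e]\<close> the solution falls steeply towards \<open>l\<close>, so once
    below its top it stays there and is eventually pushed below its bottom.\<close>
  have below_top: "f t \<le> pp - e" if "t \<in> {l<..x}" for t
  proof (rule level_barrier_le[where f = f and f' = f' and l = l and y = x])
    fix s assume s: "s \<in> {l<..x}" "f s = pp - e"
    have "0 < c / (s - l)^2" using s \<open>0 < c\<close> by simp
    also have "\<dots> \<le> f' s" using s x assms by (intro inside) auto
    finally show "0 < f' s" .
  qed (use that x y has_deriv_near in auto)
  show "eventually (\<lambda>t. f t \<le> pm + e) (at_right l)"
  proof (rule eventually_le_if_slope_ge_above[where f' = f'])
    show "bdd_below (f ` {l<..x})" using x y by (intro bdd_near) auto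
  qed (use x y below_top inside has_deriv_near in auto)
qed

lemma tendsto_zero_of_h: "\<exists>L\<in>{pm, pp}. (f \<longlongrightarrow> L) (at_right l)"
  using tendsto_one_of_two[OF trivial_limit_at_right_real _ eventually_trapped eventually_one_side]
    zeros by (auto simp: nondegenerate_zeros_def)

end

end

locale degenerate_endpoint_ode =
  fixes f f' a h :: "real \<Rightarrow> real" and l r x0 K C :: real
  assumes l_less_r: "l < r" and endpoint: "x0 = l \<or> x0 = r"
    and has_deriv: "\<And>t. t \<in> {l<..<r} \<Longrightarrow> (f has_real_derivative f' t) (at t)"
    and a_pos: "\<And>t. t \<in> {l<..<r} \<Longrightarrow> 0 < a t"
    and a_le: "\<And>t. t \<in> {l<..<r} \<Longrightarrow> a t \<le> K * (t - x0)^2"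
    and residual_le: "\<And>t. t \<in> {l<..<r} \<Longrightarrow> \<bar>a t * f' t + h (f t)\<bar> \<le> C * \<bar>t - x0\<bar>"
    and bounded_f: "bounded (f ` {l<..<r})"
begin

text \<open>At the right endpoint, \<open>t \<mapsto> - f (- t)\<close> solves an equation of the same form near \<open>- r\<close>.\<close>
lemma left_or_reflected:
  obtains "x0 = l" "left_degenerate_ode f f' a h l r K C"
  | "x0 = r" "left_degenerate_ode (\<lambda>t. - f (- t)) (\<lambda>t. f' (- t)) (\<lambda>t. a (- t)) (\<lambda>p. h (- p))
      (- r) (- l) K C"
proof (cases "x0 = l")
  case True
  then have "left_degenerate_ode f f' a h l r K C"
    using l_less_r has_deriv a_pos a_le residual_le bounded_f by unfold_locales auto
  with True that show thesis by blast
next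
  case False
  with endpoint have "x0 = r" by simp
  have mem: "t \<in> {- r<..<- l} \<longleftrightarrow> - t \<in> {l<..<r}" for t by auto
  have "left_degenerate_ode (\<lambda>t. - f (- t)) (\<lambda>t. f' (- t)) (\<lambda>t. a (- t)) (\<lambda>p. h (- p))
      (- r) (- l) K C"
  proof
    show "- r < - l" using l_less_r by simp
    fix t assume "t \<in> {- r<..<- l}"
    then have t: "- t \<in> {l<..<r}" by (simp add: mem)
    show "((\<lambda>t. - f (- t)) has_real_derivative f' (- t)) (at t)"
      using has_deriv[OF t] by (auto intro!: derivative_eq_intros DERIV_chain2[where g = uminus])
    show "0 < a (- t)" using a_pos[OF t] .
    show "a (- t) \<le> K * (t - - r)^2"
      using a_le[OF t] \<open>x0 = r\<close> by (simp add: power2_commute add.commute)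
    show "\<bar>a (- t) * f' (- t) + h (- (- f (- t)))\<bar> \<le> C * (t - - r)"
      using residual_le[OF t] t \<open>x0 = r\<close> by (simp add: add.commute)
  next
    have "(\<lambda>t. - f (- t)) ` {- r<..<- l} = uminus ` f ` {l<..<r}"
      by (auto simp: image_image mem intro!: image_eqI[where x = "- _"])
    then show "bounded ((\<lambda>t. - f (- t)) ` {- r<..<- l})"
      using bounded_f by simp
  qed
  with \<open>x0 = r\<close> that show thesis by blast
qed

lemma h_lower_bound_nonpos:
  assumes "\<And>p. d \<le> h p" shows "d \<le> 0"
proof (cases rule: left_or_reflected)
  case 1
  show ?thesis using 1(2) assms by (rule left_degenerate_ode.h_lower_bound_nonpos)
next
  case 2
  show ?thesis using 2(2) by (rule left_degenerate_ode.h_lower_bound_nonpos) (rule assms)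
qed

lemma tendsto_zero_of_h:
  assumes "nondegenerate_zeros h \<eta> pm pp"
  shows "\<exists>L\<in>{pm, pp}. (f \<longlongrightarrow> L) (at x0 within {l<..<r})"
proof (cases rule: left_or_reflected)
  case 1
  obtain L where "L \<in> {pm, pp}" "(f \<longlongrightarrow> L) (at_right l)"
    using left_degenerate_ode.tendsto_zero_of_h[OF 1(2) assms] ..
  moreover have "at x0 within {l<..<r} \<le> at_right l" unfolding \<open>x0 = l\<close> by (rule at_le) auto
  ultimately show ?thesis by (blast intro: tendsto_mono)
next
  case 2
  obtain L where "L \<in> {- pp, - pm}" and lim: "((\<lambda>t. - f (- t)) \<longlongrightarrow> L) (at_right (- r))"
    using left_degenerate_ode.tendsto_zero_of_h[OF 2(2) nondegenerate_zeros_reflect[OF assms]] ..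
  have "(f \<longlongrightarrow> - L) (at_left r)"
    unfolding at_left_minus filterlim_filtermap using tendsto_minus[OF lim] by simp
  moreover have "at x0 within {l<..<r} \<le> at_left r" unfolding \<open>x0 = r\<close> by (rule at_le) auto
  moreover have "- L \<in> {pm, pp}" using \<open>L \<in> _\<close> by auto
  ultimately show ?thesis by (blast intro: tendsto_mono)
qed

end

lemma frontier_greaterThanLessThan_real:
  fixes l r :: real
  assumes "l < r" shows "frontier {l<..<r} = {l, r}"
  using assms by (auto simp: frontier_def interior_open)

lemma le_sq_dist_if_sqrt_lipschitz:
  fixes a :: "real \<Rightarrow> real"
  assumes "\<kappa>-lipschitz_on UNIV (\<lambda>x. sqrt (a x))" and "0 \<le> a t" and "a x0 = 0"
  shows "a t \<le> \<kappa>^2 * (t - x0)^2"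
proof -
  have "sqrt (a t) \<le> \<kappa> * \<bar>t - x0\<bar>"
    using lipschitz_onD[OF assms(1), of t x0] \<open>a x0 = 0\<close> \<open>0 \<le> a t\<close> by (simp add: dist_real_def)
  then have "(sqrt (a t))^2 \<le> (\<kappa> * \<bar>t - x0\<bar>)^2" using \<open>0 \<le> a t\<close> by (intro power_mono) simp_all
  with \<open>0 \<le> a t\<close> show ?thesis by (simp add: power_mult_distrib)
qed

lemma H_sqc_dist_le:
  assumes "H_sqc \<alpha>0 \<alpha>1 \<gamma> \<eta> H" and "0 \<le> \<gamma>" and "\<bar>p\<bar> \<le> M"
  shows "\<bar>H x p - H y p\<bar> \<le> \<bar>\<alpha>1\<bar> * (M powr \<gamma> + 1) * \<bar>x - y\<bar>"
proof -
  have "\<bar>H x p - H y p\<bar> \<le> \<alpha>1 * (\<bar>p\<bar> powr \<gamma> + 1) * \<bar>x - y\<bar>"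
    using assms(1) by (simp add: H_sqc_def)
  also have "\<dots> \<le> \<bar>\<alpha>1\<bar> * (M powr \<gamma> + 1) * \<bar>x - y\<bar>"
    using powr_mono2[OF assms(2) abs_ge_zero assms(3)] by (intro mult_right_mono mult_mono) auto
  finally show ?thesis .
qed

lemma H_sqc_rates:
  assumes "H_sqc \<alpha>0 \<alpha>1 \<gamma> \<eta> H"
  shows "hat_p H x \<le> p1 \<Longrightarrow> p1 < p2 \<Longrightarrow> \<eta> * (p2 - p1) \<le> H x p2 - H x p1"
    and "p1 < p2 \<Longrightarrow> p2 \<le> hat_p H x \<Longrightarrow> \<eta> * (p2 - p1) \<le> H x p1 - H x p2"
  using assms by (auto simp: H_sqc_def abs_minus_commute)

lemma H_sqc_hat_p_min:
  assumes "H_sqc \<alpha>0 \<alpha>1 \<gamma> \<eta> H"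
  shows "H x (hat_p H x) \<le> H x p"
  using theI'[of "\<lambda>p. \<forall>q. H x p \<le> H x q"] assms by (simp add: H_sqc_def hat_p_def)

theorem mainTheorem9:
  fixes a :: "real \<Rightarrow> real" and H :: "real \<Rightarrow> real \<Rightarrow> real"
    and \<kappa> \<alpha>0 \<alpha>1 \<gamma> \<eta> :: real
    and l r x0 lam :: real and f f' :: "real \<Rightarrow> real"
  assumes a_range: "\<forall>x. 0 \<le> a x \<and> a x \<le> 1"
    and a_lip: "\<kappa>-lipschitz_on UNIV (\<lambda>x. sqrt (a x))"
    and H: "H_sqc \<alpha>0 \<alpha>1 \<gamma> \<eta> H" and \<gamma>: "\<gamma> > 2" and \<eta>: "\<eta> > 0"
    and J: "l < r"
    and a_pos: "\<forall>x\<in>{l<..<r}. a x > 0"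
    and x0: "x0 \<in> frontier {l<..<r}" and ax0: "a x0 = 0"
    and f_deriv: "\<forall>x\<in>{l<..<r}. (f has_real_derivative f' x) (at x)"
    and f'_cont: "continuous_on {l<..<r} f'"
    and f_bdd: "bounded (f ` {l<..<r})"
    and eq: "\<forall>x\<in>{l<..<r}. a x * f' x + H x (f x) = lam"
  shows "lam \<ge> hat_lambda H x0 \<and>
         (\<exists>L. (f \<longlongrightarrow> L) (at x0 within {l<..<r}) \<and>
              (L = p_minus H lam x0 \<or> L = p_plus H lam x0))"
proof -
  from f_bdd obtain M where "\<forall>y\<in>f ` {l<..<r}. \<bar>y\<bar> \<le> M" by (auto simp: bounded_iff)
  then have M: "\<And>t. t \<in> {l<..<r} \<Longrightarrow> \<bar>f t\<bar> \<le> M" by simp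
  interpret degenerate_endpoint_ode f f' a "\<lambda>p. H x0 p - lam" l r x0 "\<kappa>^2" "\<bar>\<alpha>1\<bar> * (M powr \<gamma> + 1)"
  proof
    show "x0 = l \<or> x0 = r" using x0 by (simp add: frontier_greaterThanLessThan_real[OF J])
    fix t assume t: "t \<in> {l<..<r}"
    show "a t \<le> \<kappa>^2 * (t - x0)^2"
      using a_lip a_range ax0 by (intro le_sq_dist_if_sqrt_lipschitz) auto
    have "a t * f' t = lam - H t (f t)" using eq t by (auto simp: eq_diff_eq)
    then have "\<bar>a t * f' t + (H x0 (f t) - lam)\<bar> = \<bar>H x0 (f t) - H t (f t)\<bar>" by simp
    also have "\<dots> \<le> \<bar>\<alpha>1\<bar> * (M powr \<gamma> + 1) * \<bar>t - x0\<bar>"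
      using H_sqc_dist_le[OF H _ M[OF t], of x0 t] \<gamma> by (simp add: abs_minus_commute)
    finally show "\<bar>a t * f' t + (H x0 (f t) - lam)\<bar> \<le> \<bar>\<alpha>1\<bar> * (M powr \<gamma> + 1) * \<bar>t - x0\<bar>" .
  qed (use J a_pos f_deriv f_bdd in auto)
  have "hat_lambda H x0 \<le> lam"
    using h_lower_bound_nonpos[of "hat_lambda H x0 - lam"] H_sqc_hat_p_min[OF H]
    by (simp add: hat_lambda_def)
  moreover have "nondegenerate_zeros (\<lambda>p. H x0 p - lam) \<eta> (p_minus H lam x0) (p_plus H lam x0)"
    unfolding p_minus_def p_plus_def using \<eta> H_sqc_rates[OF H] calculation
    by (intro nondegenerate_zeros_sublevel[where q = "hat_p H x0"]) (auto simp: hat_lambda_def)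
  ultimately show ?thesis using tendsto_zero_of_h by blast
qed

end
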